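(* Let $\Omega\subset\mathbb{R}^n$ be a nonempty closed convex set and $f:\mathbb{R}^n\to\mathbb{R}$ differentiable over $\Omega$ such that (i) $f(\bm{x})\ge\underline{f}$ for all $\bm{x}\in\Omega$, (ii) $\|\nabla f(\bm{x})-\nabla f(\bm{y})\|_2\le L\|\bm{x}-\bm{y}\|_2$ for all $\bm{x},\bm{y}\in\Omega$ for some $L>0$, and (iii) the relaxation sequence $\{\omega_k\}\subset[0,\infty)$ satisfies $\sum_{k=0}^\infty\omega_k<\infty$. Suppose $\{\bm{x}_k\}$ is generated by either IGPM without line search or IGPM with line search (described in the context), with $\bm{z}_k$ the inexact projections and $\bm{z}_k^*$ the exact minimizer of $p(\cdot;\bm{x}_k)$. Then \[\lim_{k\to\infty}\Delta p(\bm{z}_k;\bm{x}_k)=0\quad\text{and}\quad\lim_{k\to\infty}\Delta p(\bm{z}_k^*;\bm{x}_k)=0.\]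
   Context: Problem: minimize $f(\bm{x})$ subject to $\bm{x}\in\Omega$. For $\bm{x}_k\in\Omega$ write $\bm{g}_k=\nabla f(\bm{x}_k)$, $\bm{v}_k=\bm{x}_k-\beta\bm{g}_k$ for a fixed $\beta>0$, and define $p(\bm{z};\bm{x}_k)=\tfrac12\|\bm{z}-\bm{v}_k\|_2^2+\delta_\Omega(\bm{z})$ ($\delta_\Omega$ the $0/+\infty$ indicator of $\Omega$), $\bm{z}_k^*=\arg\min_{\bm{z}}p(\bm{z};\bm{x}_k)$ (the Euclidean projection of $\bm{v}_k$ onto $\Omega$), $\Delta p(\bm{z};\bm{x}_k)=p(\bm{x}_k;\bm{x}_k)-p(\bm{z};\bm{x}_k)$, and $q(\bm{u};\bm{x}_k)=-\tfrac12\|\bm{u}-\bm{v}_k\|_2^2-\delta_\Omega^*(\bm{u})+\tfrac12\|\bm{v}_k\|_2^2$ with $\delta^*_\Omega(\bm{u})=\sup_{\bm{x}\in\Omega}\langle\bm{x},\bm{u}\rangle$. An inexact projection at iteration $k$ is a point $\bm{z}_k\in\Omega$ with $\Delta p(\bm{z}_k;\bm{x}_k)\ge0$ together with some dual point $\bm{u}_k$ such that $\frac{p(\bm{x}_k;\bm{x}_k)-p(\bm{z}_k;\bm{x}_k)+\omega_k}{p(\bm{x}_k;\bm{x}_k)-q(\bm{u}_k;\bm{x}_k)+\omega_k}\ge\gamma$, where $0<\gamma<1$. IGPM without line search: $0<\beta\le1/L$, $\bm{x}_0\in\Omega$, and $\bm{x}_{k+1}=\bm{z}_k$ for all $k$.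 IGPM with line search: fix $0<\eta<1$, $0<\alpha\le1$, $\beta>0$, $0<\theta<1$, $\bm{x}_0\in\Omega$; set $\bm{d}_k=\bm{z}_k-\bm{x}_k$, let $\alpha_k$ be the largest value in $\{\theta^i\alpha: i=0,1,2,\dots\}$ with $f(\bm{x}_k+\alpha_k\bm{d}_k)\le f(\bm{x}_k)+\eta\alpha_k\bm{g}_k^T\bm{d}_k$, and set $\bm{x}_{k+1}=\bm{x}_k+\alpha_k\bm{d}_k$. The algorithms are considered as generating infinite sequences. *)

theory Defs
  imports "HOL-Analysis.Analysis"
begin

text \<open>The indicator term of p vanishes at every point used below (all lie in Omega),
  so p is recorded by its quadratic part; zstar is the argmin of p over Omega.\<close>

definition vk :: "('a::euclidean_space \<Rightarrow> 'a) \<Rightarrow> real \<Rightarrow> 'a \<Rightarrow> 'a" where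
  "vk grad \<beta> x = x - \<beta> *\<^sub>R grad x"

definition pp :: "('a::euclidean_space \<Rightarrow> 'a) \<Rightarrow> real \<Rightarrow> 'a \<Rightarrow> 'a \<Rightarrow> real" where
  "pp grad \<beta> x z = (1/2) * (norm (z - vk grad \<beta> x))\<^sup>2"

definition dp :: "('a::euclidean_space \<Rightarrow> 'a) \<Rightarrow> real \<Rightarrow> 'a \<Rightarrow> 'a \<Rightarrow> real" where
  "dp grad \<beta> x z = pp grad \<beta> x x - pp grad \<beta> x z"

definition zstar :: "'a::euclidean_space set \<Rightarrow> ('a \<Rightarrow> 'a) \<Rightarrow> real \<Rightarrow> 'a \<Rightarrow> 'a" where
  "zstar \<Omega> grad \<beta> x = (SOME z. z \<in> \<Omega> \<and> (\<forall>w\<in>\<Omega>. pp grad \<beta> x z \<le> pp grad \<beta> x w))"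

text \<open>Support function of Omega (used only where it is finite).\<close>
definition supp :: "'a::euclidean_space set \<Rightarrow> 'a \<Rightarrow> real" where
  "supp \<Omega> u = Sup ((\<lambda>y. inner y u) ` \<Omega>)"

definition qq :: "'a::euclidean_space set \<Rightarrow> ('a \<Rightarrow> 'a) \<Rightarrow> real \<Rightarrow> 'a \<Rightarrow> 'a \<Rightarrow> real" where
  "qq \<Omega> grad \<beta> x u = - (1/2) * (norm (u - vk grad \<beta> x))\<^sup>2 - supp \<Omega> u
                        + (1/2) * (norm (vk grad \<beta> x))\<^sup>2"

text \<open>Inexact projection: z in Omega, Delta p >= 0, and dual point u with
  (Delta p(z) + omega) / (p(x) - q(u) + omega) >= gamma (cleared of the denominator;
  a u with infinite support value gives q = -infinity and ratio 0 < gamma, hence is excluded).\<close>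
definition inexact_proj ::
  "'a::euclidean_space set \<Rightarrow> ('a \<Rightarrow> 'a) \<Rightarrow> real \<Rightarrow> real \<Rightarrow> real \<Rightarrow> 'a \<Rightarrow> 'a \<Rightarrow> 'a \<Rightarrow> bool" where
  "inexact_proj \<Omega> grad \<beta> \<gamma> \<omega> x z u \<longleftrightarrow>
     z \<in> \<Omega> \<and> dp grad \<beta> x z \<ge> 0 \<and> bdd_above ((\<lambda>y. inner y u) ` \<Omega>) \<and>
     dp grad \<beta> x z + \<omega> \<ge> \<gamma> * (pp grad \<beta> x x - qq \<Omega> grad \<beta> x u + \<omega>)"

definition igpm_no_ls :: "'a::euclidean_space set \<Rightarrow> real \<Rightarrow> real \<Rightarrow> (nat \<Rightarrow> 'a) \<Rightarrow> (nat \<Rightarrow> 'a) \<Rightarrow> bool" where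
  "igpm_no_ls \<Omega> L \<beta> x z \<longleftrightarrow> 0 < \<beta> \<and> \<beta> \<le> 1 / L \<and> x 0 \<in> \<Omega> \<and> (\<forall>k. x (Suc k) = z k)"

definition armijo :: "('a::euclidean_space \<Rightarrow> real) \<Rightarrow> ('a \<Rightarrow> 'a) \<Rightarrow> real \<Rightarrow> 'a \<Rightarrow> 'a \<Rightarrow> real \<Rightarrow> bool" where
  "armijo f grad \<eta> x d a \<longleftrightarrow> f (x + a *\<^sub>R d) \<le> f x + \<eta> * a * inner (grad x) d"

definition igpm_ls ::
  "'a::euclidean_space set \<Rightarrow> ('a \<Rightarrow> real) \<Rightarrow> ('a \<Rightarrow> 'a) \<Rightarrow> real \<Rightarrow> real \<Rightarrow> real \<Rightarrow> real
     \<Rightarrow> (nat \<Rightarrow> 'a) \<Rightarrow> (nat \<Rightarrow> 'a) \<Rightarrow> bool" where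
  "igpm_ls \<Omega> f grad \<beta> \<eta> \<alpha> \<theta> x z \<longleftrightarrow>
     0 < \<eta> \<and> \<eta> < 1 \<and> 0 < \<alpha> \<and> \<alpha> \<le> 1 \<and> 0 < \<beta> \<and> 0 < \<theta> \<and> \<theta> < 1 \<and> x 0 \<in> \<Omega> \<and>
     (\<forall>k. \<exists>i. armijo f grad \<eta> (x k) (z k - x k) (\<theta> ^ i * \<alpha>)
              \<and> (\<forall>j<i. \<not> armijo f grad \<eta> (x k) (z k - x k) (\<theta> ^ j * \<alpha>))
              \<and> x (Suc k) = x k + (\<theta> ^ i * \<alpha>) *\<^sub>R (z k - x k))"

end

theory Submission
  imports Defs
begin

text \<open>Both variants of IGPM satisfy a sufficient decrease condition
  \<open>f x\<^sub>k\<^sub>+\<^sub>1 \<le> f x\<^sub>k - c \<Delta>p(z\<^sub>k; x\<^sub>k)\<close> with \<open>c > 0\<close>: without line search this is the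
  descent lemma for an \<open>L\<close>-smooth \<open>f\<close> and \<open>\<beta> \<le> 1/L\<close>; with line search the Armijo rule gives
  it once the accepted step is bounded below, which follows from the descent lemma applied to
  the last rejected step. Telescoping against the lower bound of \<open>f\<close> makes \<open>\<Delta>p(z\<^sub>k; x\<^sub>k)\<close>
  summable, hence null. Weak duality \<open>q(u\<^sub>k) \<le> p(z\<^sub>k\<^sup>*)\<close> turns the inexactness criterion into
  \<open>\<gamma> \<Delta>p(z\<^sub>k\<^sup>*; x\<^sub>k) \<le> \<Delta>p(z\<^sub>k; x\<^sub>k) + \<omega>\<^sub>k\<close>, and \<open>\<omega>\<^sub>k \<rightarrow> 0\<close> since it is summable.\<close>

lemma dp_expand: "dp grad \<beta> x z = - \<beta> * inner (grad x) (z - x) - (1/2) * (norm (z - x))\<^sup>2"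
  unfolding dp_def pp_def vk_def power2_norm_eq_inner
  by (simp add: inner_diff_left inner_diff_right inner_commute algebra_simps)

lemma qq_le_pp:
  assumes "z \<in> \<Omega>" and "bdd_above ((\<lambda>y. inner y u) ` \<Omega>)"
  shows "qq \<Omega> grad \<beta> x u \<le> pp grad \<beta> x z"
proof -
  define v where "v = vk grad \<beta> x"
  have "inner z u \<le> supp \<Omega> u" unfolding supp_def using assms by (intro cSUP_upper)
  moreover have "0 \<le> (1/2) * (norm (z + u - v))\<^sup>2" by simp
  moreover have "pp grad \<beta> x z - qq \<Omega> grad \<beta> x u - supp \<Omega> u + inner z u
      = (1/2) * (norm (z + u - v))\<^sup>2"
    unfolding pp_def qq_def v_def[symmetric]
    by (simp add: power2_norm_eq_inner inner_simps algebra_simps inner_commute)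
  ultimately show ?thesis by linarith
qed

lemma zstar_minimizes:
  assumes "closed \<Omega>" and "\<Omega> \<noteq> {}"
  shows "zstar \<Omega> grad \<beta> x \<in> \<Omega> \<and> (\<forall>w\<in>\<Omega>. pp grad \<beta> x (zstar \<Omega> grad \<beta> x) \<le> pp grad \<beta> x w)"
proof -
  define v where "v = vk grad \<beta> x"
  have "pp grad \<beta> x (closest_point \<Omega> v) \<le> pp grad \<beta> x w" if "w \<in> \<Omega>" for w
  proof -
    have "dist v (closest_point \<Omega> v) \<le> dist v w" using assms(1) that by (rule closest_point_le)
    then show ?thesis unfolding pp_def v_def[symmetric]
      by (simp add: power_mono dist_norm norm_minus_commute)
  qed
  then have "\<exists>z. z \<in> \<Omega> \<and> (\<forall>w\<in>\<Omega>. pp grad \<beta> x z \<le> pp grad \<beta> x w)"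
    using closest_point_in_set[OF assms] by blast
  then show ?thesis unfolding zstar_def by (rule someI_ex)
qed

lemma dp_zstar_nonneg:
  assumes "closed \<Omega>" and "\<Omega> \<noteq> {}" and "x \<in> \<Omega>"
  shows "0 \<le> dp grad \<beta> x (zstar \<Omega> grad \<beta> x)"
  using zstar_minimizes[OF assms(1,2)] assms(3) unfolding dp_def by auto

lemma inexact_proj_dp_zstar_le:
  assumes "closed \<Omega>" and "\<Omega> \<noteq> {}" and "0 \<le> \<gamma>" and "0 \<le> \<omega>"
    and "inexact_proj \<Omega> grad \<beta> \<gamma> \<omega> x z u"
  shows "\<gamma> * dp grad \<beta> x (zstar \<Omega> grad \<beta> x) \<le> dp grad \<beta> x z + \<omega>"
proof -
  have crit: "\<gamma> * (pp grad \<beta> x x - qq \<Omega> grad \<beta> x u + \<omega>) \<le> dp grad \<beta> x z + \<omega>"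
    and "bdd_above ((\<lambda>y. inner y u) ` \<Omega>)"
    using assms(5) unfolding inexact_proj_def by auto
  then have "qq \<Omega> grad \<beta> x u \<le> pp grad \<beta> x (zstar \<Omega> grad \<beta> x)"
    using zstar_minimizes[OF assms(1,2)] by (intro qq_le_pp) auto
  then have "dp grad \<beta> x (zstar \<Omega> grad \<beta> x) + \<omega> \<le> pp grad \<beta> x x - qq \<Omega> grad \<beta> x u + \<omega>"
    unfolding dp_def by simp
  then have "\<gamma> * (dp grad \<beta> x (zstar \<Omega> grad \<beta> x) + \<omega>) \<le> dp grad \<beta> x z + \<omega>"
    using crit assms(3) by (meson mult_left_mono order_trans)
  moreover have "0 \<le> \<gamma> * \<omega>" using assms(3,4) by simp
  ultimately show ?thesis by (simp add: distrib_left)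
qed

lemma inexact_proj_dp_zstar_tendsto_zero:
  assumes "closed \<Omega>" and "\<Omega> \<noteq> {}" and "0 < \<gamma>" and "\<And>k. 0 \<le> \<omega> k" and "\<omega> \<longlonglongrightarrow> 0"
    and "\<And>k. x k \<in> \<Omega>" and "\<And>k. inexact_proj \<Omega> grad \<beta> \<gamma> (\<omega> k) (x k) (z k) (u k)"
    and "(\<lambda>k. dp grad \<beta> (x k) (z k)) \<longlonglongrightarrow> 0"
  shows "(\<lambda>k. dp grad \<beta> (x k) (zstar \<Omega> grad \<beta> (x k))) \<longlonglongrightarrow> 0"
proof -
  have "(\<lambda>k. (dp grad \<beta> (x k) (z k) + \<omega> k) / \<gamma>) \<longlonglongrightarrow> (0 + 0) / \<gamma>"
    using assms(3) by (intro tendsto_divide tendsto_add tendsto_const assms(5,8)) auto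
  then have upper: "(\<lambda>k. (dp grad \<beta> (x k) (z k) + \<omega> k) / \<gamma>) \<longlonglongrightarrow> 0" by simp
  have "dp grad \<beta> (x k) (zstar \<Omega> grad \<beta> (x k)) \<le> (dp grad \<beta> (x k) (z k) + \<omega> k) / \<gamma>" for k
  proof -
    have "\<gamma> * dp grad \<beta> (x k) (zstar \<Omega> grad \<beta> (x k)) \<le> dp grad \<beta> (x k) (z k) + \<omega> k"
      using assms(3,4,7) by (intro inexact_proj_dp_zstar_le[OF assms(1,2)]) auto
    then show ?thesis using assms(3) by (simp add: pos_le_divide_eq mult.commute)
  qed
  then show ?thesis using dp_zstar_nonneg[OF assms(1,2,6)]
    by (intro tendsto_sandwich[OF _ _ tendsto_const upper] always_eventually) auto
qed

lemma convex_step_mem: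
  assumes "convex \<Omega>" and "x \<in> \<Omega>" and "z \<in> \<Omega>" and "0 \<le> t" and "t \<le> 1"
  shows "x + t *\<^sub>R (z - x) \<in> \<Omega>"
proof -
  have "x + t *\<^sub>R (z - x) = (1 - t) *\<^sub>R x + t *\<^sub>R z" by (simp add: algebra_simps)
  then show ?thesis using convexD_alt[OF assms] by simp
qed

lemma backtracking_step_bounds:
  fixes \<theta> \<alpha> :: real
  assumes "0 < \<theta>" and "\<theta> < 1" and "0 < \<alpha>" and "\<alpha> \<le> 1"
  shows "0 < \<theta> ^ i * \<alpha> \<and> \<theta> ^ i * \<alpha> \<le> 1"
proof -
  have "\<theta> ^ i \<le> 1" using assms(1,2) by (simp add: power_le_one)
  then show ?thesis using mult_le_one[OF _ _ assms(4)] assms(1,3) by simp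
qed

lemma igpm_iterates_in:
  assumes "convex \<Omega>" and "\<And>k. z k \<in> \<Omega>"
    and "igpm_no_ls \<Omega> L \<beta> x z \<or> igpm_ls \<Omega> f grad \<beta> \<eta> \<alpha> \<theta> x z"
  shows "x k \<in> \<Omega>"
proof (induction k)
  case 0
  then show ?case using assms(3) unfolding igpm_no_ls_def igpm_ls_def by auto
next
  case (Suc k)
  show ?case
  proof (cases "igpm_no_ls \<Omega> L \<beta> x z")
    case True
    then show ?thesis using assms(2) unfolding igpm_no_ls_def by auto
  next
    case False
    then have ls: "igpm_ls \<Omega> f grad \<beta> \<eta> \<alpha> \<theta> x z" using assms(3) by auto
    then obtain i where "x (Suc k) = x k + (\<theta> ^ i * \<alpha>) *\<^sub>R (z k - x k)"
      unfolding igpm_ls_def by blast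
    moreover have "0 < \<theta> ^ i * \<alpha> \<and> \<theta> ^ i * \<alpha> \<le> 1"
      using ls unfolding igpm_ls_def by (intro backtracking_step_bounds) auto
    ultimately show ?thesis using convex_step_mem[OF assms(1) Suc assms(2)] by simp
  qed
qed

lemma armijo_step_decrease:
  assumes "0 < \<beta>" and "0 \<le> \<eta>" and "0 \<le> a" and "armijo f grad \<eta> x (z - x) a"
  shows "f (x + a *\<^sub>R (z - x)) \<le> f x - \<eta> * a / \<beta> * dp grad \<beta> x z"
proof -
  have "\<beta> * inner (grad x) (z - x) \<le> - dp grad \<beta> x z" unfolding dp_expand by simp
  then have "inner (grad x) (z - x) \<le> - dp grad \<beta> x z / \<beta>"
    using assms(1) by (simp add: field_simps)
  then have "\<eta> * a * inner (grad x) (z - x) \<le> \<eta> * a * (- dp grad \<beta> x z / \<beta>)"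
    using assms(2,3) by (intro mult_left_mono) auto
  then show ?thesis using assms(4) unfolding armijo_def by simp
qed

locale lipschitz_gradient =
  fixes \<Omega> :: "'a::euclidean_space set" and f :: "'a \<Rightarrow> real" and grad :: "'a \<Rightarrow> 'a" and L :: real
  assumes convex_domain: "convex \<Omega>"
    and has_gradient: "\<And>y. y \<in> \<Omega> \<Longrightarrow> (f has_derivative (\<lambda>h. inner (grad y) h)) (at y)"
    and gradient_lipschitz: "\<And>y w. y \<in> \<Omega> \<Longrightarrow> w \<in> \<Omega> \<Longrightarrow> norm (grad y - grad w) \<le> L * norm (y - w)"
begin

lemma descent_lemma:
  assumes "x \<in> \<Omega>" and "y \<in> \<Omega>"
  shows "f y \<le> f x + inner (grad x) (y - x) + L/2 * (norm (y - x))\<^sup>2"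
proof -
  define d where "d = y - x"
  define \<phi> where "\<phi> t = f (x + t *\<^sub>R d) - t * inner (grad x) d - L/2 * t\<^sup>2 * (norm d)\<^sup>2" for t
  have "\<phi> 1 \<le> \<phi> 0"
  proof (rule DERIV_nonpos_imp_nonincreasing[of 0 1 \<phi>])
    fix t :: real
    assume t: "0 \<le> t" "t \<le> 1"
    define g where "g = grad (x + t *\<^sub>R d)"
    have mem: "x + t *\<^sub>R d \<in> \<Omega>"
      unfolding d_def using convex_domain assms t by (rule convex_step_mem)
    have "((\<lambda>t. x + t *\<^sub>R d) has_derivative (\<lambda>h. h *\<^sub>R d)) (at t)"
      by (auto intro!: derivative_eq_intros)
    from has_derivative_compose[OF this has_gradient[OF mem]]
    have "((\<lambda>t. f (x + t *\<^sub>R d)) has_real_derivative inner g d) (at t)"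
      unfolding g_def by (rule has_derivative_imp_has_field_derivative) simp
    then have deriv: "(\<phi> has_real_derivative inner g d - inner (grad x) d - L * t * (norm d)\<^sup>2) (at t)"
      unfolding \<phi>_def by (auto intro!: derivative_eq_intros)
    have "inner g d - inner (grad x) d = inner (g - grad x) d" by (simp add: inner_diff_left)
    also have "\<dots> \<le> norm (g - grad x) * norm d" by (rule norm_cauchy_schwarz)
    also have "\<dots> \<le> L * norm (t *\<^sub>R d) * norm d"
      using mult_right_mono[OF gradient_lipschitz[OF mem assms(1)] norm_ge_zero] unfolding g_def by simp
    also have "\<dots> = L * t * (norm d)\<^sup>2" using t by (simp add: power2_eq_square)
    finally show "\<exists>y. (\<phi> has_real_derivative y) (at t) \<and> y \<le> 0"
      using deriv by (intro exI[of _ "inner g d - inner (grad x) d - L * t * (norm d)\<^sup>2"]) simp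
  qed simp
  then show ?thesis unfolding \<phi>_def d_def by simp
qed

lemma full_step_decrease:
  assumes "0 < \<beta>" and "\<beta> * L \<le> 1" and "x \<in> \<Omega>" and "z \<in> \<Omega>"
  shows "f z \<le> f x - dp grad \<beta> x z / \<beta>"
proof -
  define N where "N = (norm (z - x))\<^sup>2"
  have "\<beta> * f z \<le> \<beta> * (f x + inner (grad x) (z - x) + L/2 * N)"
    using descent_lemma[OF assms(3,4)] assms(1) unfolding N_def by simp
  also have "\<dots> = \<beta> * f x - dp grad \<beta> x z - (1 - \<beta> * L) * N / 2"
    unfolding dp_expand N_def[symmetric] by (simp add: field_simps)
  also have "\<dots> \<le> \<beta> * f x - dp grad \<beta> x z"
    using assms(2) unfolding N_def by simp
  finally show ?thesis using assms(1) by (simp add: field_simps)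
qed

lemma armijo_rejected_step_ge:
  assumes "0 < \<beta>" and "\<eta> < 1" and "x \<in> \<Omega>" and "z \<in> \<Omega>" and "z \<noteq> x"
    and "0 \<le> dp grad \<beta> x z" and "0 < s" and "s \<le> 1"
    and "\<not> armijo f grad \<eta> x (z - x) s"
  shows "1 - \<eta> < \<beta> * L * s"
proof -
  define G where "G = inner (grad x) (z - x)"
  define N where "N = (norm (z - x))\<^sup>2"
  have N_pos: "0 < N" using assms(5) unfolding N_def by simp
  have "x + s *\<^sub>R (z - x) \<in> \<Omega>"
    using convex_step_mem[OF convex_domain assms(3,4)] assms(7,8) by simp
  from descent_lemma[OF assms(3) this]
  have "f (x + s *\<^sub>R (z - x)) \<le> f x + s * G + L/2 * (s\<^sup>2 * N)"
    unfolding G_def N_def by (simp add: power_mult_distrib)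
  moreover have "f x + \<eta> * s * G < f (x + s *\<^sub>R (z - x))"
    using assms(9) unfolding armijo_def G_def by simp
  ultimately have "\<eta> * s * G < s * G + L/2 * (s\<^sup>2 * N)" by linarith
  then have "s * ((\<eta> - 1) * G) < s * (L/2 * s * N)"
    by (simp add: algebra_simps power2_eq_square)
  then have rejected: "(\<eta> - 1) * G < L/2 * s * N" using assms(7) by simp
  have "(1 - \<eta>) * (N/2) \<le> (1 - \<eta>) * (- \<beta> * G)"
    using assms(2,6) unfolding dp_expand G_def N_def by (intro mult_left_mono) auto
  also have "\<dots> = \<beta> * ((\<eta> - 1) * G)" by (simp add: algebra_simps)
  also have "\<dots> < \<beta> * (L/2 * s * N)" using rejected assms(1) by simp
  finally have "(1 - \<eta>) * N < (\<beta> * L * s) * N" by (simp add: algebra_simps)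
  then show ?thesis using N_pos by simp
qed

lemma backtracking_decrease:
  assumes "0 < \<beta>" and "0 < L" and "0 < \<eta>" and "\<eta> < 1" and "0 < \<theta>" and "\<theta> < 1"
    and "0 < \<alpha>" and "\<alpha> \<le> 1" and "x \<in> \<Omega>" and "z \<in> \<Omega>" and "0 \<le> dp grad \<beta> x z"
    and accepted: "armijo f grad \<eta> x (z - x) (\<theta> ^ i * \<alpha>)"
    and first: "\<forall>j<i. \<not> armijo f grad \<eta> x (z - x) (\<theta> ^ j * \<alpha>)"
  shows "f (x + (\<theta> ^ i * \<alpha>) *\<^sub>R (z - x))
           \<le> f x - \<eta> * min \<alpha> (\<theta> * (1 - \<eta>) / (\<beta> * L)) / \<beta> * dp grad \<beta> x z"
proof -
  define a where "a = \<theta> ^ i * \<alpha>"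
  define c where "c = min \<alpha> (\<theta> * (1 - \<eta>) / (\<beta> * L))"
  have "c * dp grad \<beta> x z \<le> a * dp grad \<beta> x z"
  proof (cases "z = x")
    case True
    then show ?thesis by (simp add: dp_def)
  next
    case False
    have "c \<le> a"
    proof (cases i)
      case 0
      then show ?thesis unfolding a_def c_def by simp
    next
      case (Suc j)
      have "0 < \<theta> ^ j * \<alpha> \<and> \<theta> ^ j * \<alpha> \<le> 1" using assms(5-8) by (rule backtracking_step_bounds)
      then have "1 - \<eta> < \<beta> * L * (\<theta> ^ j * \<alpha>)"
        using first Suc False assms by (intro armijo_rejected_step_ge) auto
      from mult_strict_left_mono[OF this assms(5)]
      have "\<theta> * (1 - \<eta>) < (\<beta> * L) * a" unfolding a_def Suc by (simp add: mult_ac)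
      then have "\<theta> * (1 - \<eta>) / (\<beta> * L) \<le> a"
        using assms(1,2) by (simp add: pos_divide_le_eq mult.commute)
      then show ?thesis unfolding c_def by simp
    qed
    then show ?thesis using assms(11) by (rule mult_right_mono)
  qed
  then have "\<eta> / \<beta> * (c * dp grad \<beta> x z) \<le> \<eta> / \<beta> * (a * dp grad \<beta> x z)"
    using assms(1,3) by (intro mult_left_mono) auto
  moreover have "0 \<le> a" using backtracking_step_bounds[OF assms(5-8), of i] unfolding a_def by simp
  ultimately show ?thesis
    using armijo_step_decrease[OF assms(1) _ _ accepted] assms(3) unfolding a_def c_def
    by (simp add: mult.assoc)
qed

lemma igpm_sufficient_decrease:
  assumes "0 < L" and "\<And>k. x k \<in> \<Omega>" and "\<And>k. z k \<in> \<Omega>" and "\<And>k. 0 \<le> dp grad \<beta> (x k) (z k)"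
    and "igpm_no_ls \<Omega> L \<beta> x z \<or> igpm_ls \<Omega> f grad \<beta> \<eta> \<alpha> \<theta> x z"
  obtains c where "0 < c" and "\<And>k. f (x (Suc k)) \<le> f (x k) - c * dp grad \<beta> (x k) (z k)"
  using assms(5)
proof
  assume no_ls: "igpm_no_ls \<Omega> L \<beta> x z"
  then have "0 < \<beta>" and "\<beta> * L \<le> 1" using assms(1) unfolding igpm_no_ls_def by (auto simp: field_simps)
  then show thesis
    using that[of "1/\<beta>"] full_step_decrease assms(2,3) no_ls unfolding igpm_no_ls_def by simp
next
  assume ls: "igpm_ls \<Omega> f grad \<beta> \<eta> \<alpha> \<theta> x z"
  then have params: "0 < \<eta>" "\<eta> < 1" "0 < \<alpha>" "\<alpha> \<le> 1" "0 < \<beta>" "0 < \<theta>" "\<theta> < 1"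
    unfolding igpm_ls_def by auto
  show thesis
  proof (rule that[of "\<eta> * min \<alpha> (\<theta> * (1 - \<eta>) / (\<beta> * L)) / \<beta>"])
    show "0 < \<eta> * min \<alpha> (\<theta> * (1 - \<eta>) / (\<beta> * L)) / \<beta>" using params assms(1) by simp
    fix k
    obtain i where "armijo f grad \<eta> (x k) (z k - x k) (\<theta> ^ i * \<alpha>)"
      and "\<forall>j<i. \<not> armijo f grad \<eta> (x k) (z k - x k) (\<theta> ^ j * \<alpha>)"
      and "x (Suc k) = x k + (\<theta> ^ i * \<alpha>) *\<^sub>R (z k - x k)"
      using ls unfolding igpm_ls_def by blast
    then show "f (x (Suc k)) \<le> f (x k) - \<eta> * min \<alpha> (\<theta> * (1 - \<eta>) / (\<beta> * L)) / \<beta> * dp grad \<beta> (x k) (z k)"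
      using backtracking_decrease params assms(1-4) by simp
  qed
qed

end

lemma summable_of_sufficient_decrease:
  fixes F D :: "nat \<Rightarrow> real"
  assumes "0 < c" and "\<And>k. 0 \<le> D k" and "\<And>k. F (Suc k) \<le> F k - c * D k" and "\<And>k. b \<le> F k"
  shows "summable D"
proof (rule summableI_nonneg_bounded)
  fix n
  have "c * (\<Sum>k<n. D k) \<le> F 0 - F n"
  proof (induction n)
    case (Suc n)
    then show ?case using assms(3)[of n] by (simp add: algebra_simps)
  qed simp
  then have "c * (\<Sum>k<n. D k) \<le> F 0 - b" using assms(4)[of n] by linarith
  then show "(\<Sum>k<n. D k) \<le> (F 0 - b) / c" using assms(1) by (simp add: field_simps)
qed (use assms(2) in auto)

theorem lemma3p3:
  fixes \<Omega> :: "'a::euclidean_space set" and f :: "'a \<Rightarrow> real" and grad :: "'a \<Rightarrow> 'a"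
    and flow L \<beta> \<gamma> \<eta> \<alpha> \<theta> :: real and \<omega> :: "nat \<Rightarrow> real" and x z u :: "nat \<Rightarrow> 'a"
  assumes "\<Omega> \<noteq> {}" and "closed \<Omega>" and "convex \<Omega>"
    and "\<forall>y\<in>\<Omega>. (f has_derivative (\<lambda>h. inner (grad y) h)) (at y)"
    and "\<forall>y\<in>\<Omega>. f y \<ge> flow"
    and "L > 0" and "\<forall>y\<in>\<Omega>. \<forall>w\<in>\<Omega>. norm (grad y - grad w) \<le> L * norm (y - w)"
    and "\<forall>k. \<omega> k \<ge> 0" and "summable \<omega>"
    and "0 < \<gamma>" and "\<gamma> < 1"
    and "\<forall>k. inexact_proj \<Omega> grad \<beta> \<gamma> (\<omega> k) (x k) (z k) (u k)"
    and "igpm_no_ls \<Omega> L \<beta> x z \<or> igpm_ls \<Omega> f grad \<beta> \<eta> \<alpha> \<theta> x z"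
  shows "(\<lambda>k. dp grad \<beta> (x k) (z k)) \<longlonglongrightarrow> 0 \<and>
         (\<lambda>k. dp grad \<beta> (x k) (zstar \<Omega> grad \<beta> (x k))) \<longlonglongrightarrow> 0"
proof
  interpret lipschitz_gradient \<Omega> f grad L using assms(3,4,7) by unfold_locales auto
  have z_in: "z k \<in> \<Omega>" and dp_nonneg: "0 \<le> dp grad \<beta> (x k) (z k)" for k
    using assms(12) unfolding inexact_proj_def by auto
  have x_in: "x k \<in> \<Omega>" for k using igpm_iterates_in assms(3) z_in assms(13) .
  obtain c where "0 < c" and "\<And>k. f (x (Suc k)) \<le> f (x k) - c * dp grad \<beta> (x k) (z k)"
    using igpm_sufficient_decrease assms(6,13) x_in z_in dp_nonneg by metis
  then have "summable (\<lambda>k. dp grad \<beta> (x k) (z k))"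
    using dp_nonneg assms(5) x_in by (intro summable_of_sufficient_decrease[of c _ "f \<circ> x" flow]) auto
  then show dp_lim: "(\<lambda>k. dp grad \<beta> (x k) (z k)) \<longlonglongrightarrow> 0" by (rule summable_LIMSEQ_zero)
  show "(\<lambda>k. dp grad \<beta> (x k) (zstar \<Omega> grad \<beta> (x k))) \<longlonglongrightarrow> 0"
    using assms(8,12) summable_LIMSEQ_zero[OF assms(9)]
    by (intro inexact_proj_dp_zstar_tendsto_zero[OF assms(2,1,10) _ _ x_in _ dp_lim]) auto
qed

end
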